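(* Let $T\subseteq\mathbb{R}^n$ be an action set. If $T'$ is a face of $T$, then $T'$ is an action set.
   Context: Single-commodity network pricing setting: $G=(\mathcal{V},\mathcal{A})$ directed graph, arc costs $c\ge0$, nonempty tolled arc set $\mathcal{A}_1\subsetneq\mathcal{A}$, $n=|\mathcal{A}_1|$, $N$ node–arc incidence matrix, single origin $o$ and destination $d$ connected by a toll-free path, $b_o=1$, $b_d=-1$, $b_i=0$ otherwise, $\mathcal{X}=\{x\in\mathbb{R}^{\mathcal{A}}: Nx=b,\ x\ge0\}$, $x_{\mathcal{A}_1}$ the restriction of $x$ to $\mathcal{A}_1$. Let $f(t)=\min\{c^\top x+t^\top x_{\mathcal{A}_1}: x\in\mathcal{X}\}$ for $t\in\mathbb{R}^n$, $t\ge0$, and $f(t)=-\infty$ otherwise. A set $T\subseteq\mathbb{R}^n$ is an action set if there is a face $F$ of the polyhedron $\operatorname{epi}(-f)\subseteq\mathbb{R}^n\times\mathbb{R}$ such that (i) the direction $(0,1)$ does not belong to the linear subspace parallel to $\operatorname{aff}(F)$ ($F$ is non-vertical), and (ii) $T=\{t\in\mathbb{R}^n : (t,z)\in F\text{ for some } z\}$. *)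

theory Defs
  imports "HOL-Analysis.Analysis"
begin

(* Arcs are the elements of the finite type 't + 'u: Inl a are the tolled arcs (A_1),
   Inr u the toll-free arcs. Vertices: finite type 'v. tail/head give arc endpoints. *)

definition incid :: "('e::finite \<Rightarrow> 'v) \<Rightarrow> ('e \<Rightarrow> 'v) \<Rightarrow> ('e \<Rightarrow> real) \<Rightarrow> 'v \<Rightarrow> real" where
  "incid tail head x i = (\<Sum>e | tail e = i. x e) - (\<Sum>e | head e = i. x e)"

definition bvec :: "'v \<Rightarrow> 'v \<Rightarrow> 'v \<Rightarrow> real" where
  "bvec orig dest i = (if i = orig then 1 else if i = dest then -1 else 0)"

definition feasible_flows :: "('e::finite \<Rightarrow> 'v) \<Rightarrow> ('e \<Rightarrow> 'v) \<Rightarrow> 'v \<Rightarrow> 'v \<Rightarrow> ('e \<Rightarrow> real) set" where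
  "feasible_flows tail head orig dest =
     {x. (\<forall>i. incid tail head x i = bvec orig dest i) \<and> (\<forall>e. 0 \<le> x e)}"

definition toll_free_path :: "('t + 'u \<Rightarrow> 'v) \<Rightarrow> ('t + 'u \<Rightarrow> 'v) \<Rightarrow> 'v \<Rightarrow> 'v \<Rightarrow> bool" where
  "toll_free_path tail head orig dest =
     (\<exists>es. es \<noteq> [] \<and> (\<forall>e\<in>set es. \<exists>u. e = Inr u) \<and> tail (hd es) = orig \<and> head (last es) = dest
        \<and> (\<forall>k. k + 1 < length es \<longrightarrow> head (es ! k) = tail (es ! (k + 1))))"

definition fval :: "('t::finite + 'u::finite \<Rightarrow> 'v) \<Rightarrow> ('t + 'u \<Rightarrow> 'v) \<Rightarrow> ('t + 'u \<Rightarrow> real)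
     \<Rightarrow> 'v \<Rightarrow> 'v \<Rightarrow> real ^ 't \<Rightarrow> ereal" where
  "fval tail head c orig dest t =
     (if (\<forall>a. 0 \<le> t $ a)
      then ereal (Inf {(\<Sum>e\<in>UNIV. c e * x e) + (\<Sum>a\<in>UNIV. t $ a * x (Inl a)) | x. x \<in> feasible_flows tail head orig dest})
      else -\<infinity>)"

definition epi_neg_f :: "('t::finite + 'u::finite \<Rightarrow> 'v) \<Rightarrow> ('t + 'u \<Rightarrow> 'v) \<Rightarrow> ('t + 'u \<Rightarrow> real)
     \<Rightarrow> 'v \<Rightarrow> 'v \<Rightarrow> ((real ^ 't) \<times> real) set" where
  "epi_neg_f tail head c orig dest = {(t, z). - fval tail head c orig dest t \<le> ereal z}"

definition nonvertical :: "((real ^ 't) \<times> real) set \<Rightarrow> bool" where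
  "nonvertical F = ((0, 1) \<notin> {x - y | x y. x \<in> affine hull F \<and> y \<in> affine hull F})"

definition is_action_set :: "('t::finite + 'u::finite \<Rightarrow> 'v) \<Rightarrow> ('t + 'u \<Rightarrow> 'v) \<Rightarrow> ('t + 'u \<Rightarrow> real)
     \<Rightarrow> 'v \<Rightarrow> 'v \<Rightarrow> (real ^ 't) set \<Rightarrow> bool" where
  "is_action_set tail head c orig dest T =
     (\<exists>F. F face_of epi_neg_f tail head c orig dest \<and> nonvertical F \<and> T = fst ` F)"

end

theory Submission
  imports Defs
begin

text \<open>A face \<open>T'\<close> of the projection \<open>T\<close> of the non-vertical face \<open>F\<close> lifts to the face
  \<open>F \<inter> fst -` T'\<close> of \<open>F\<close>, hence of \<open>epi (-f)\<close>; it is non-vertical as a subset of \<open>F\<close>, and it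
  projects onto \<open>T'\<close> because \<open>T' \<subseteq> T\<close>. None of the network hypotheses is needed.\<close>

lemma face_of_Int_linear_vimage:
  assumes f: "linear f" and S: "convex S" and T: "T face_of f ` S"
  shows "S \<inter> f -` T face_of S"
  unfolding face_of_def
proof (intro conjI ballI impI)
  show "S \<inter> f -` T \<subseteq> S" by blast
  show "convex (S \<inter> f -` T)"
    using S T f by (simp add: convex_Int convex_linear_vimage face_of_imp_convex)
next
  fix a b x
  assume a: "a \<in> S" and b: "b \<in> S" and x: "x \<in> S \<inter> f -` T" and seg: "x \<in> open_segment a b"
  then obtain u where u: "0 < u" "u < 1" and x_eq: "x = (1 - u) *\<^sub>R a + u *\<^sub>R b"
    by (auto simp: in_segment)
  have fx: "f x = (1 - u) *\<^sub>R f a + u *\<^sub>R f b"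
    using f x_eq by (simp add: linear_add linear_scale)
  have "f a \<in> T \<and> f b \<in> T"
  proof (cases "f a = f b")
    case True
    then have "f x = f a" using fx by (simp add: algebra_simps)
    then show ?thesis using x True by auto
  next
    case False
    then have "f x \<in> open_segment (f a) (f b)" using fx u by (auto simp: in_segment)
    then show ?thesis using T a b x by (auto dest: face_ofD)
  qed
  then show "a \<in> S \<inter> f -` T" "b \<in> S \<inter> f -` T" using a b by auto
qed

lemma nonvertical_subset: "nonvertical F \<Longrightarrow> G \<subseteq> F \<Longrightarrow> nonvertical G"
  unfolding nonvertical_def using hull_mono by blast

theorem lemma3:
  fixes tail head :: "'t::finite + 'u::finite \<Rightarrow> 'v::finite"
    and c :: "'t + 'u \<Rightarrow> real" and orig dest :: 'v
    and T T' :: "(real ^ 't) set"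
  assumes "inj (\<lambda>e. (tail e, head e))"
    and "\<forall>e. 0 \<le> c e"
    and "orig \<noteq> dest"
    and "toll_free_path tail head orig dest"
    and "is_action_set tail head c orig dest T"
    and "T' face_of T"
  shows "is_action_set tail head c orig dest T'"
proof -
  obtain F where F: "F face_of epi_neg_f tail head c orig dest" "nonvertical F" "T = fst ` F"
    using assms(5) unfolding is_action_set_def by blast
  define F' where "F' = F \<inter> fst -` T'"
  have "F' face_of F"
    unfolding F'_def using F assms(6)
    by (auto intro: face_of_Int_linear_vimage linear_fst face_of_imp_convex)
  then have "F' face_of epi_neg_f tail head c orig dest"
    using F(1) face_of_trans by blast
  moreover have "nonvertical F'"
    using F(2) by (rule nonvertical_subset) (simp add: F'_def)
  moreover have "T' = fst ` F'"
    using face_of_imp_subset[OF assms(6)] F(3) unfolding F'_def by force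
  ultimately show ?thesis
    unfolding is_action_set_def by blast
qed

end
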